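(* Let $R[x,y]$ be a relation with $n$ tuples whose vectors $(x,y)$ have $\ell_2$ norm at most $B$. Let $\widehat{E[X]}=\frac1n\sum_{t\in R}t[x]$, $\widehat{E[X^2]}=\frac1n\sum_{t\in R}t[x]^2$, $\widehat{\sigma^2_x}=\widehat{E[X^2]}-\widehat{E[X]}^2$, and let $\widetilde{E[X]}=\widehat{E[X]}+e_1$, $\widetilde{E[X^2]}=\widehat{E[X^2]}+e_2$ with $e_1,e_2\sim\mathcal N(0,\sigma^2/n^2)$, where $\sigma=\sqrt{2\ln(1.25/\delta)}\,\Delta/\epsilon$ with $\Delta=O(B^2)$, and $\widetilde{\sigma^2_x}=\widetilde{E[X^2]}-\widetilde{E[X]}^2$. Then, in the asymptotic regime $n,B\to\infty$ and $\epsilon,\delta,p\to0$, with probability at least $1-p$, $$|\widehat{\sigma^2_x}-\widetilde{\sigma^2_x}|=O\!\left(\frac{B^4\ln(1/\delta)\ln(1/p)}{\epsilon^2 n}\right).$$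
   Context: Here $e_1,e_2$ are the Gaussian noises added (after normalization by $n$) to the aggregated monomials $\sum x$ and $\sum x^2$ by a Gaussian mechanism with sensitivity $\Delta$; the probability is over this noise, and $\epsilon,\delta\in(0,1]$. *)

theory Defs
  imports "HOL-Probability.Probability"
begin

text \<open>A relation R[x,y] with n tuples is a list of pairs (x,y) of length n.\<close>

definition mean_x :: "(real \<times> real) list \<Rightarrow> real" where
  "mean_x R = (\<Sum>t\<leftarrow>R. fst t) / real (length R)"

definition sqmean_x :: "(real \<times> real) list \<Rightarrow> real" where
  "sqmean_x R = (\<Sum>t\<leftarrow>R. (fst t)\<^sup>2) / real (length R)"

definition var_hat :: "(real \<times> real) list \<Rightarrow> real" where
  "var_hat R = sqmean_x R - (mean_x R)\<^sup>2"

definition var_tilde :: "(real \<times> real) list \<Rightarrow> real \<Rightarrow> real \<Rightarrow> real" where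
  "var_tilde R e1 e2 = (sqmean_x R + e2) - (mean_x R + e1)\<^sup>2"

definition gauss_sigma :: "real \<Rightarrow> real \<Rightarrow> real \<Rightarrow> real" where
  "gauss_sigma eps delta Delta = sqrt (2 * ln (1.25 / delta)) * Delta / eps"

end

theory Submission
  imports Defs
begin

text \<open>
  The error of the noisy variance is var_hat - var_tilde = 2 m e1 + e1^2 - e2, where m is the
  empirical mean; as |m| \<le> B, it is at most 2 B t + t^2 + t once both noises are at most t in
  absolute value. For a centred Gaussian of variance \<sigma>^2 the 2k-th moment is at most
  (k \<sigma>^2)^k, so Markov's inequality gives P(|e| \<ge> t) \<le> (k \<sigma>^2 / t^2)^k; taking
  k = ceil(ln(1/p)) and t^2 of order \<sigma>^2 ln(1/p) makes each tail at most p/2.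
  The Gaussian mechanism has \<sigma>^2 = O(B^4 ln(1/\<delta>) / (\<epsilon>^2 n^2)), hence
  t = O(B^2 sqrt(ln(1/\<delta>) ln(1/p)) / (\<epsilon> n)); since B, n, 1/\<epsilon>, ln(1/\<delta>) and ln(1/p)
  are all at least 1, each of 2 B t, t^2 and t is O(B^4 ln(1/\<delta>) ln(1/p) / (\<epsilon>^2 n)).
\<close>

lemma fact_double_le: "(fact (2 * k) :: real) \<le> fact k * (2 * real k) ^ k"
proof -
  have "fact k dvd (fact (2 * k) :: nat)"
    by (rule fact_dvd) simp
  then have "(fact (2 * k) :: nat) = fact k * (fact (2 * k) div fact k)"
    by simp
  also have "fact (2 * k) div fact k \<le> (2 * k) ^ k"
    using fact_div_fact_le_pow[of k "2 * k"] by simp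
  then have "fact k * (fact (2 * k) div fact k) \<le> fact k * (2 * k) ^ k"
    by simp
  finally have "real (fact (2 * k)) \<le> real (fact k * (2 * k) ^ k)"
    by linarith
  then show ?thesis
    by (simp add: of_nat_fact)
qed

lemma normal_even_moment_bound:
  assumes "distributed M lborel X (normal_density \<mu> \<sigma>)" and "0 < \<sigma>"
  shows "integrable M (\<lambda>\<omega>. (X \<omega> - \<mu>) ^ (2 * k))"
    and "(\<integral>\<omega>. (X \<omega> - \<mu>) ^ (2 * k) \<partial>M) \<le> (real k * \<sigma>\<^sup>2) ^ k"
proof -
  show "integrable M (\<lambda>\<omega>. (X \<omega> - \<mu>) ^ (2 * k))"
    using distributed_integrable[OF assms(1), of "\<lambda>x. (x - \<mu>) ^ (2 * k)"]
      integrable_normal_moment[OF assms(2), of \<mu> "2 * k"] by simp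
  have "(\<integral>\<omega>. (X \<omega> - \<mu>) ^ (2 * k) \<partial>M) = fact (2 * k) / ((2 / \<sigma>\<^sup>2) ^ k * fact k)"
    using distributed_integral[OF assms(1), of "\<lambda>x. (x - \<mu>) ^ (2 * k)"]
      integral_normal_moment_even[OF assms(2), of \<mu> k] by simp
  also have "\<dots> \<le> fact k * (2 * real k) ^ k / ((2 / \<sigma>\<^sup>2) ^ k * fact k)"
    using fact_double_le[of k] assms(2) by (intro divide_right_mono) auto
  also have "\<dots> = (real k * \<sigma>\<^sup>2) ^ k"
    using assms(2) by (simp add: field_simps)
  finally show "(\<integral>\<omega>. (X \<omega> - \<mu>) ^ (2 * k) \<partial>M) \<le> (real k * \<sigma>\<^sup>2) ^ k" .
qed

lemma normal_tail_le_moment_bound: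
  assumes "distributed M lborel X (normal_density \<mu> \<sigma>)" and "0 < \<sigma>" "0 < t" "0 < k"
  shows "measure M {\<omega>\<in>space M. t \<le> \<bar>X \<omega> - \<mu>\<bar>} \<le> (real k * \<sigma>\<^sup>2 / t\<^sup>2) ^ k"
proof -
  have [measurable]: "X \<in> borel_measurable M"
    using distributed_measurable[OF assms(1)] by simp
  have "t \<le> \<bar>x\<bar> \<longleftrightarrow> t ^ (2 * k) \<le> x ^ (2 * k)" for x :: real
    using assms(3,4) power_mono_iff[of t "\<bar>x\<bar>" "2 * k"] by (simp add: power_even_abs)
  then have "measure M {\<omega>\<in>space M. t \<le> \<bar>X \<omega> - \<mu>\<bar>}
      = measure M {\<omega>\<in>space M. t ^ (2 * k) \<le> (X \<omega> - \<mu>) ^ (2 * k)}"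
    by simp
  also have "\<dots> \<le> (\<integral>\<omega>. (X \<omega> - \<mu>) ^ (2 * k) \<partial>M) / t ^ (2 * k)"
    using assms(3) normal_even_moment_bound(1)[OF assms(1,2)]
    by (intro integral_Markov_inequality_measure[where A = "space M"]) (auto simp: power_mult)
  also have "\<dots> \<le> (real k * \<sigma>\<^sup>2) ^ k / t ^ (2 * k)"
    using assms(3) by (intro divide_right_mono normal_even_moment_bound(2)[OF assms(1,2)]) simp
  finally show ?thesis
    by (simp add: power_divide power_mult)
qed

lemma normal_tail_le_half:
  assumes "distributed M lborel X (normal_density \<mu> \<sigma>)" and "0 < \<sigma>" "0 < t" "0 < p"
    and "1 \<le> ln (1 / p)" and "16 * ln (1 / p) * \<sigma>\<^sup>2 \<le> t\<^sup>2"
  shows "measure M {\<omega>\<in>space M. t \<le> \<bar>X \<omega> - \<mu>\<bar>} \<le> p / 2"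
proof -
  define k where "k = nat \<lceil>ln (1 / p)\<rceil>"
  have k_ge: "ln (1 / p) \<le> real k" and k_le: "real k \<le> 2 * ln (1 / p)" and "0 < k"
    unfolding k_def using assms(5) by linarith+
  have "real k * \<sigma>\<^sup>2 \<le> 2 * ln (1 / p) * \<sigma>\<^sup>2"
    using k_le by (intro mult_right_mono) auto
  then have ratio: "real k * \<sigma>\<^sup>2 / t\<^sup>2 \<le> 1 / 8"
    using assms(3,6) by (simp add: divide_le_eq)
  have "exp 1 \<le> (4 :: real)"
    using exp_le by simp
  then have quarter: "1 / 4 \<le> exp (-1 :: real)"
    by (simp add: exp_minus field_simps)
  have "measure M {\<omega>\<in>space M. t \<le> \<bar>X \<omega> - \<mu>\<bar>} \<le> (real k * \<sigma>\<^sup>2 / t\<^sup>2) ^ k"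
    using normal_tail_le_moment_bound[OF assms(1-3) \<open>0 < k\<close>] .
  also have "\<dots> \<le> (1 / 8) ^ k"
    using ratio by (intro power_mono) auto
  also have "\<dots> = (1 / 2) ^ k * (1 / 4) ^ k"
    by (simp flip: power_mult_distrib)
  also have "\<dots> \<le> 1 / 2 * exp (-1) ^ k"
    using quarter power_decreasing[of 1 k "1 / 2 :: real"] \<open>0 < k\<close>
    by (intro mult_mono power_mono) auto
  also have "exp (-1) ^ k = exp (- real k)"
    by (simp flip: exp_of_nat_mult)
  also have "\<dots> \<le> exp (- ln (1 / p))"
    using k_ge by simp
  also have "\<dots> = p"
    using assms(4) by (simp add: ln_div)
  finally show ?thesis
    by simp
qed

lemma abs_mean_x_le:
  assumes "\<forall>t\<in>set R. sqrt ((fst t)\<^sup>2 + (snd t)\<^sup>2) \<le> B" and "R \<noteq> []"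
  shows "\<bar>mean_x R\<bar> \<le> B"
proof -
  have fst_le: "\<bar>fst t\<bar> \<le> B" if "t \<in> set R" for t
  proof -
    have "\<bar>fst t\<bar> \<le> sqrt ((fst t)\<^sup>2 + (snd t)\<^sup>2)"
      using real_sqrt_sum_squares_ge1[of "\<bar>fst t\<bar>" "snd t"] by simp
    also have "\<dots> \<le> B"
      using assms(1) that by blast
    finally show ?thesis .
  qed
  have "\<bar>\<Sum>t\<leftarrow>R. fst t\<bar> \<le> (\<Sum>t\<leftarrow>R. \<bar>fst t\<bar>)"
    using sum_list_abs[of "map fst R"] by (simp add: comp_def)
  also have "\<dots> \<le> (\<Sum>t\<leftarrow>R. B)"
    using fst_le by (rule sum_list_mono)
  also have "\<dots> = real (length R) * B"
    by (simp add: sum_list_triv)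
  finally show ?thesis
    using assms(2) by (simp add: mean_x_def abs_divide divide_le_eq mult.commute)
qed

lemma var_hat_minus_var_tilde:
  "var_hat R - var_tilde R e1 e2 = 2 * mean_x R * e1 + e1\<^sup>2 - e2"
  by (simp add: var_hat_def var_tilde_def power2_eq_square algebra_simps)

lemma abs_var_hat_minus_var_tilde_le:
  assumes "\<bar>mean_x R\<bar> \<le> B" and "\<bar>e1\<bar> \<le> t" and "\<bar>e2\<bar> \<le> t"
  shows "\<bar>var_hat R - var_tilde R e1 e2\<bar> \<le> 2 * B * t + t\<^sup>2 + t"
proof -
  have "\<bar>2 * mean_x R * e1\<bar> \<le> 2 * B * t"
    using assms(1,2) by (simp add: abs_mult mult_mono')
  moreover have "e1\<^sup>2 \<le> t\<^sup>2"
    using assms(2) by (metis abs_ge_zero order_trans power2_abs power_mono)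
  ultimately show ?thesis
    unfolding var_hat_minus_var_tilde using assms(3) by (smt (verit) zero_le_power2)
qed

lemma (in prob_space) prob_var_tilde_error_le:
  assumes e1: "distributed M lborel e1 (normal_density 0 \<sigma>)"
    and e2: "distributed M lborel e2 (normal_density 0 \<sigma>)"
    and "0 < \<sigma>" "0 < t" "0 < p" "1 \<le> ln (1 / p)" "16 * ln (1 / p) * \<sigma>\<^sup>2 \<le> t\<^sup>2"
    and "\<bar>mean_x R\<bar> \<le> B" and "2 * B * t + t\<^sup>2 + t \<le> K"
  shows "1 - p \<le> prob {\<omega>\<in>space M. \<bar>var_hat R - var_tilde R (e1 \<omega>) (e2 \<omega>)\<bar> \<le> K}"
    (is "_ \<le> prob ?S")
proof -
  have [measurable]: "e1 \<in> borel_measurable M" "e2 \<in> borel_measurable M"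
    using distributed_measurable[OF e1] distributed_measurable[OF e2] by simp_all
  define E where "E e = {\<omega>\<in>space M. t \<le> \<bar>e \<omega> - 0\<bar>}" for e :: "'a \<Rightarrow> real"
  have E_events: "E e1 \<in> events" "E e2 \<in> events"
    unfolding E_def by measurable
  have "\<omega> \<in> ?S" if "\<omega> \<in> space M" "\<bar>e1 \<omega>\<bar> \<le> t" "\<bar>e2 \<omega>\<bar> \<le> t" for \<omega>
    using that abs_var_hat_minus_var_tilde_le[OF assms(8)] assms(9) by fastforce
  then have "space M - ?S \<subseteq> E e1 \<union> E e2"
    by (force simp: E_def)
  then have "prob (space M - ?S) \<le> prob (E e1) + prob (E e2)"
    using E_events by (meson finite_measure_mono measure_Un_le order_trans sets.Un)
  also have "\<dots> \<le> p / 2 + p / 2"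
    unfolding E_def using assms(3-7)
    by (intro add_mono normal_tail_le_half[OF e1] normal_tail_le_half[OF e2])
  finally show ?thesis
    by (simp add: prob_compl var_tilde_def)
qed

lemma ln_inverse_ge_one:
  fixes x :: real
  assumes "0 < x" and "x \<le> 1 / 3"
  shows "1 \<le> ln (1 / x)"
proof -
  have "1 \<le> ln (3 :: real)"
    using exp_le by (subst ln_ge_iff) auto
  also have "\<dots> \<le> ln (1 / x)"
    using assms by (intro ln_mono) (auto simp: field_simps)
  finally show ?thesis .
qed

lemma ln_gauss_sigma_factor_bounds:
  fixes \<delta> :: real
  assumes "0 < \<delta>" and "1 \<le> ln (1 / \<delta>)"
  shows "0 < ln (1.25 / \<delta>)" and "ln (1.25 / \<delta>) \<le> 2 * ln (1 / \<delta>)"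
proof -
  have "ln (1.25 / \<delta>) = ln 1.25 + ln (1 / \<delta>)"
    using ln_div[of "1.25" \<delta>] ln_div[of 1 \<delta>] assms(1) by simp
  moreover have "0 \<le> ln (1.25 :: real)" "ln (1.25 :: real) \<le> 1"
    using ln_le_minus_one[of "1.25 :: real"] by auto
  ultimately show "0 < ln (1.25 / \<delta>)" "ln (1.25 / \<delta>) \<le> 2 * ln (1 / \<delta>)"
    using assms(2) by linarith+
qed

lemma gauss_sigma_pos:
  assumes "0 < \<epsilon>" "0 < \<delta>" "1 \<le> ln (1 / \<delta>)" "0 < \<Delta>"
  shows "0 < gauss_sigma \<epsilon> \<delta> \<Delta>"
  using assms ln_gauss_sigma_factor_bounds(1)[OF assms(2,3)] by (simp add: gauss_sigma_def)

lemma gauss_sigma_sq_le: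
  assumes "0 < \<delta>" "1 \<le> ln (1 / \<delta>)" "0 \<le> \<Delta>" "\<Delta> \<le> c * B\<^sup>2"
  shows "(gauss_sigma \<epsilon> \<delta> \<Delta>)\<^sup>2 \<le> 4 * c\<^sup>2 * B ^ 4 * ln (1 / \<delta>) / \<epsilon>\<^sup>2"
proof -
  have "(gauss_sigma \<epsilon> \<delta> \<Delta>)\<^sup>2 = 2 * ln (1.25 / \<delta>) * \<Delta>\<^sup>2 / \<epsilon>\<^sup>2"
    using ln_gauss_sigma_factor_bounds(1)[OF assms(1,2)]
    by (simp add: gauss_sigma_def power_divide power_mult_distrib)
  also have "\<dots> \<le> 2 * (2 * ln (1 / \<delta>)) * (c * B\<^sup>2)\<^sup>2 / \<epsilon>\<^sup>2"
    using ln_gauss_sigma_factor_bounds[OF assms(1,2)] assms(3,4)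
    by (intro divide_right_mono mult_mono power_mono) auto
  also have "\<dots> = 4 * c\<^sup>2 * B ^ 4 * ln (1 / \<delta>) / \<epsilon>\<^sup>2"
    by (simp add: power_mult_distrib flip: power_mult)
  finally show ?thesis .
qed

lemma error_budget_le:
  fixes c B w n :: real
  assumes "0 \<le> c" "1 \<le> B" "1 \<le> w" "1 \<le> n"
  defines "t \<equiv> 8 * c * B * w / n"
  shows "2 * B * t + t\<^sup>2 + t \<le> (24 * c + 64 * c\<^sup>2) * (B\<^sup>2 * w\<^sup>2 / n)"
proof -
  define a where "a = B * w / n"
  define T where "T = B\<^sup>2 * w\<^sup>2 / n"
  have Ba: "B * a \<le> T"
    using assms(2-4) by (simp add: a_def T_def power2_eq_square divide_right_mono)
  have "a\<^sup>2 = (B * w)\<^sup>2 / n\<^sup>2"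
    by (simp add: a_def power_divide)
  also have "\<dots> \<le> T"
    using assms(4) unfolding T_def power_mult_distrib[symmetric]
    by (intro divide_left_mono) (auto simp: power2_eq_square)
  finally have a2: "a\<^sup>2 \<le> T" .
  have "a \<le> B * a"
    using assms(2-4) mult_right_mono[of 1 B a] by (simp add: a_def)
  then have a: "a \<le> T"
    using Ba by linarith
  have "2 * B * t = 16 * c * (B * a)" "t\<^sup>2 = 64 * c\<^sup>2 * a\<^sup>2" "t = 8 * c * a"
    unfolding t_def a_def by (simp_all add: power_mult_distrib power_divide)
  moreover have "16 * c * (B * a) \<le> 16 * c * T" "64 * c\<^sup>2 * a\<^sup>2 \<le> 64 * c\<^sup>2 * T" "8 * c * a \<le> 8 * c * T"
    using assms(1) Ba a2 a by (simp_all add: mult_left_mono)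
  ultimately show ?thesis
    unfolding T_def[symmetric] by (simp add: algebra_simps)
qed

lemma (in prob_space) prob_var_tilde_error_le_gauss_mechanism:
  fixes cD B \<epsilon> \<delta> p \<Delta> :: real and n :: nat and R :: "(real \<times> real) list"
  assumes e1: "distributed M lborel e1 (normal_density 0 (gauss_sigma \<epsilon> \<delta> \<Delta> / real n))"
    and e2: "distributed M lborel e2 (normal_density 0 (gauss_sigma \<epsilon> \<delta> \<Delta> / real n))"
    and "0 < cD" "1 \<le> n" "1 \<le> B" "0 < \<epsilon>" "\<epsilon> \<le> 1" "0 < \<delta>" "\<delta> \<le> 1 / 3"
    and "0 < p" "p \<le> 1 / 3" "0 < \<Delta>" "\<Delta> \<le> cD * B\<^sup>2"
    and "length R = n" "\<forall>t\<in>set R. sqrt ((fst t)\<^sup>2 + (snd t)\<^sup>2) \<le> B"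
  shows "1 - p \<le> prob {\<omega>\<in>space M. \<bar>var_hat R - var_tilde R (e1 \<omega>) (e2 \<omega>)\<bar>
           \<le> (24 * cD + 64 * cD\<^sup>2) * B ^ 4 * ln (1 / \<delta>) * ln (1 / p) / (\<epsilon>\<^sup>2 * real n)}"
proof -
  have Ld: "1 \<le> ln (1 / \<delta>)" and Lp: "1 \<le> ln (1 / p)"
    using ln_inverse_ge_one assms(8-11) by auto
  define \<sigma> where "\<sigma> = gauss_sigma \<epsilon> \<delta> \<Delta> / real n"
  define w where "w = B * sqrt (ln (1 / \<delta>) * ln (1 / p)) / \<epsilon>"
  define t where "t = 8 * cD * B * w / real n"
  have w_sq: "w\<^sup>2 = B\<^sup>2 * ln (1 / \<delta>) * ln (1 / p) / \<epsilon>\<^sup>2"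
    using Ld Lp by (simp add: w_def power_divide power_mult_distrib)
  have "1 \<le> sqrt (ln (1 / \<delta>) * ln (1 / p))"
    using Ld Lp mult_mono[OF Ld Lp] by simp
  then have "1 \<le> B * sqrt (ln (1 / \<delta>) * ln (1 / p))"
    using assms(5) mult_mono[of 1 B 1] by fastforce
  then have w: "1 \<le> w"
    using assms(6,7) by (simp add: w_def le_divide_eq)
  have \<sigma>: "0 < \<sigma>"
    using gauss_sigma_pos[OF assms(6,8) Ld assms(12)] assms(4) by (simp add: \<sigma>_def)
  have \<sigma>_sq: "\<sigma>\<^sup>2 \<le> 4 * cD\<^sup>2 * B ^ 4 * ln (1 / \<delta>) / \<epsilon>\<^sup>2 / (real n)\<^sup>2"
    unfolding \<sigma>_def power_divide using assms(4,12,13)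
    by (intro divide_right_mono gauss_sigma_sq_le[OF assms(8) Ld]) auto
  have "16 * ln (1 / p) * \<sigma>\<^sup>2
      \<le> 16 * ln (1 / p) * (4 * cD\<^sup>2 * B ^ 4 * ln (1 / \<delta>) / \<epsilon>\<^sup>2 / (real n)\<^sup>2)"
    using \<sigma>_sq Lp by (intro mult_left_mono) auto
  also have "\<dots> = 64 * cD\<^sup>2 * B\<^sup>2 * w\<^sup>2 / (real n)\<^sup>2"
    using assms(4,6) unfolding w_sq by (simp add: power2_eq_square power4_eq_xxxx field_simps)
  also have "\<dots> = t\<^sup>2"
    by (simp add: t_def power_divide power_mult_distrib)
  finally have "16 * ln (1 / p) * \<sigma>\<^sup>2 \<le> t\<^sup>2" .
  moreover have "0 < t"
    using assms(3-5) w by (simp add: t_def)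
  moreover have "\<bar>mean_x R\<bar> \<le> B"
    using abs_mean_x_le assms(4,14,15) by fastforce
  moreover have "2 * B * t + t\<^sup>2 + t \<le> (24 * cD + 64 * cD\<^sup>2) * (B\<^sup>2 * w\<^sup>2 / real n)"
    using error_budget_le[of cD B w "real n"] assms(3-5) w by (simp add: t_def)
  moreover have "B\<^sup>2 * w\<^sup>2 / real n = B ^ 4 * ln (1 / \<delta>) * ln (1 / p) / (\<epsilon>\<^sup>2 * real n)"
    unfolding w_sq by (simp add: power2_eq_square power4_eq_xxxx)
  ultimately show ?thesis
    using prob_var_tilde_error_le[OF e1[folded \<sigma>_def] e2[folded \<sigma>_def] \<sigma> _ assms(10) Lp]
    by (simp add: mult.assoc)
qed

theorem lemma1:
  fixes cD :: real
  assumes "cD > 0"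
  shows "\<exists>C>0. \<exists>(N0::nat) (B0::real) \<epsilon>0 \<delta>0 p0. \<epsilon>0 > 0 \<and> \<delta>0 > 0 \<and> p0 > 0 \<and>
    (\<forall>(n::nat) (B::real) (\<epsilon>::real) (\<delta>::real) (p::real) (\<Delta>::real)
       (R::(real \<times> real) list) (M::'a measure) (e1::'a \<Rightarrow> real) (e2::'a \<Rightarrow> real).
      n \<ge> N0 \<and> B \<ge> B0 \<and> 0 < \<epsilon> \<and> \<epsilon> \<le> 1 \<and> \<epsilon> \<le> \<epsilon>0 \<and>
      0 < \<delta> \<and> \<delta> \<le> 1 \<and> \<delta> \<le> \<delta>0 \<and> 0 < p \<and> p \<le> p0 \<and>
      0 < \<Delta> \<and> \<Delta> \<le> cD * B\<^sup>2 \<and>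
      length R = n \<and> (\<forall>t\<in>set R. sqrt ((fst t)\<^sup>2 + (snd t)\<^sup>2) \<le> B) \<and>
      prob_space M \<and>
      distributed M lborel e1 (normal_density 0 (gauss_sigma \<epsilon> \<delta> \<Delta> / real n)) \<and>
      distributed M lborel e2 (normal_density 0 (gauss_sigma \<epsilon> \<delta> \<Delta> / real n)) \<and>
      prob_space.indep_var M borel e1 borel e2
      \<longrightarrow> measure M {\<omega> \<in> space M. \<bar>var_hat R - var_tilde R (e1 \<omega>) (e2 \<omega>)\<bar>
              \<le> C * B ^ 4 * ln (1 / \<delta>) * ln (1 / p) / (\<epsilon>\<^sup>2 * real n)} \<ge> 1 - p)"
proof -
  have C_pos: "0 < 24 * cD + 64 * cD\<^sup>2"
    using assms by (simp add: add_pos_nonneg)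
  show ?thesis
    by (rule exI[of _ "24 * cD + 64 * cD\<^sup>2"], rule conjI[OF C_pos], rule exI[of _ "1 :: nat"],
        rule exI[of _ "1 :: real"], rule exI[of _ "1 :: real"], rule exI[of _ "1 / 3 :: real"],
        rule exI[of _ "1 / 3 :: real"], intro conjI allI impI, simp, simp, simp, elim conjE)
      (rule prob_space.prob_var_tilde_error_le_gauss_mechanism[OF _ _ _ assms]; assumption)
qed

end
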